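(* Let $\mathcal D$ be a $2$-$(v,k,\lambda)$ design admitting a flag-transitive point-imprimitive automorphism group $G$ preserving a nontrivial partition $\Sigma$ of the point set into $v_1$ classes of size $v_0$, and let $k_0,k_1,\mathcal D_0$ be as in the context. Then $v_0>k_0\ge2$, and one of the following holds: (1) $k_0=2$, $v=(v_0-1)(2k_1-1)+1$, and $G_\Delta^\Delta$ is $2$-transitive on $\Delta$; (2) $3\le k_0\le v_0-2$ and $\mathcal D_0$ is a $2$-design; (3) $3\le k_0=v_0-1$, $\mathcal D_0$ is a $1$-design, and $k=t(v_0-2)+1$, $v=t(v_0-1)+1$ for some integer $t\ge2$.
   Context: By the Camina–Zieschang theorem, in this situation there is a constant $k_0\ge 2$ such that every block meets every class $\Delta\in\Sigma$ in either $0$ or $k_0$ points; $k_0$ divides $k$, $k_1=k/k_0$ is the number of classes met by any block, and $\frac{v-1}{k-1}=\frac{v_0-1}{k_0-1}$. For $\Delta\in\Sigma$, $\mathcal D_0=\mathcal D_\Delta$ is the incidence structure with point set $\Delta$ and blocks the nonempty sets $B\cap\Delta$ ($B$ a block of $\mathcal D$); it is either a symmetric $1$-design with $k_0=v_0-1$ or a $2$-$(v_0,k_0,\lambda_0)$ design, and $G_\Delta^\Delta$ (the permutation group induced on $\Delta$ by its setwise stabilizer $G_\Delta$) acts flag-transitively on it. *)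

theory Defs
  imports Main "HOL-Algebra.Bij"
begin

definition design2 :: "'a set \<Rightarrow> 'a set set \<Rightarrow> nat \<Rightarrow> nat \<Rightarrow> nat \<Rightarrow> bool" where
  "design2 P Bs v k lam \<longleftrightarrow> finite P \<and> card P = v \<and> (\<forall>B\<in>Bs. B \<subseteq> P \<and> card B = k) \<and> lam > 0 \<and>
     (\<forall>x\<in>P. \<forall>y\<in>P. x \<noteq> y \<longrightarrow> card {B\<in>Bs. x \<in> B \<and> y \<in> B} = lam)"

definition design1 :: "'a set \<Rightarrow> 'a set set \<Rightarrow> nat \<Rightarrow> nat \<Rightarrow> nat \<Rightarrow> bool" where
  "design1 P Bs v k r \<longleftrightarrow> finite P \<and> card P = v \<and> (\<forall>B\<in>Bs. B \<subseteq> P \<and> card B = k) \<and> r > 0 \<and>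
     (\<forall>x\<in>P. card {B\<in>Bs. x \<in> B} = r)"

definition aut_group :: "('a \<Rightarrow> 'a) set \<Rightarrow> 'a set \<Rightarrow> 'a set set \<Rightarrow> bool" where
  "aut_group G P Bs \<longleftrightarrow> subgroup G (BijGroup P) \<and> (\<forall>g\<in>G. \<forall>B\<in>Bs. g ` B \<in> Bs)"

definition flag_transitive :: "('a \<Rightarrow> 'a) set \<Rightarrow> 'a set set \<Rightarrow> bool" where
  "flag_transitive G Bs \<longleftrightarrow> (\<forall>B\<in>Bs. \<forall>C\<in>Bs. \<forall>x\<in>B. \<forall>y\<in>C. \<exists>g\<in>G. g x = y \<and> g ` B = C)"

definition G_invariant_partition :: "('a \<Rightarrow> 'a) set \<Rightarrow> 'a set \<Rightarrow> 'a set set \<Rightarrow> nat \<Rightarrow> nat \<Rightarrow> bool" where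
  "G_invariant_partition G P \<Sigma> v0 v1 \<longleftrightarrow>
     \<Union>\<Sigma> = P \<and> (\<forall>\<Delta>\<in>\<Sigma>. \<forall>\<Delta>'\<in>\<Sigma>. \<Delta> \<noteq> \<Delta>' \<longrightarrow> \<Delta> \<inter> \<Delta>' = {}) \<and>
     (\<forall>\<Delta>\<in>\<Sigma>. card \<Delta> = v0) \<and> card \<Sigma> = v1 \<and> v0 > 1 \<and> v1 > 1 \<and>
     (\<forall>g\<in>G. \<forall>\<Delta>\<in>\<Sigma>. g ` \<Delta> \<in> \<Sigma>)"

definition induced_blocks :: "'a set set \<Rightarrow> 'a set \<Rightarrow> 'a set set" where
  "induced_blocks Bs \<Delta> = {B \<inter> \<Delta> | B. B \<in> Bs \<and> B \<inter> \<Delta> \<noteq> {}}"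

definition induced_2transitive :: "('a \<Rightarrow> 'a) set \<Rightarrow> 'a set \<Rightarrow> bool" where
  "induced_2transitive G \<Delta> \<longleftrightarrow> (\<forall>x\<in>\<Delta>. \<forall>y\<in>\<Delta>. \<forall>x'\<in>\<Delta>. \<forall>y'\<in>\<Delta>. x \<noteq> y \<longrightarrow> x' \<noteq> y' \<longrightarrow>
     (\<exists>g\<in>G. g ` \<Delta> = \<Delta> \<and> g x = x' \<and> g y = y'))"

end

theory Submission
  imports Defs
begin

text \<open>
  Counting the blocks through a point \<open>x\<close> against all other points, and against the other
  points of the class \<open>\<Delta>\<close> of \<open>x\<close>, gives \<open>r (k - 1) = \<lambda> (v - 1)\<close> and
  \<open>r (k\<^sub>0 - 1) = \<lambda> (v\<^sub>0 - 1)\<close>; hence \<open>(v - 1) (k\<^sub>0 - 1) = (v\<^sub>0 - 1) (k - 1)\<close>, which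
  forces \<open>2 \<le> k\<^sub>0 < v\<^sub>0\<close>. By flag-transitivity every block \<open>S\<close> of \<open>\<D>\<^sub>\<Delta>\<close> is the trace
  \<open>B \<inter> \<Delta>\<close> of the same number \<open>m\<close> of blocks \<open>B\<close>, so \<open>\<D>\<^sub>\<Delta>\<close> has \<open>r / m\<close> blocks through
  each point and \<open>\<lambda> / m\<close> through each pair of points: it is a 1-design and a 2-design.
  If \<open>k\<^sub>0 = 2\<close> its blocks are all pairs of \<open>\<Delta>\<close>, and flag-transitivity on \<open>\<D>\<close> makes the
  stabiliser of \<open>\<Delta>\<close> 2-transitive on \<open>\<Delta>\<close>. If \<open>k\<^sub>0 = v\<^sub>0 - 1\<close>, the relation says
  \<open>(v - 1) / (k - 1) = (v\<^sub>0 - 1) / (v\<^sub>0 - 2)\<close>, a fraction in lowest terms, which gives \<open>t\<close>.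
\<close>

section \<open>Counting in designs\<close>

lemma sum_card_incidences_swap:
  assumes "finite A" "finite Y"
  shows "(\<Sum>B\<in>A. card {y\<in>Y. y \<in> B}) = (\<Sum>y\<in>Y. card {B\<in>A. y \<in> B})"
  using sum.swap_restrict[OF assms, of "\<lambda>_ _. 1::nat" "\<lambda>B y. y \<in> B"] by simp

lemma design2_finite_blocks: "design2 P Bs v k lam \<Longrightarrow> finite Bs"
  unfolding design2_def by (meson PowI finite_Pow_iff finite_subset subsetI)

lemma design1_finite_blocks: "design1 P Bs v k r \<Longrightarrow> finite Bs"
  unfolding design1_def by (meson PowI finite_Pow_iff finite_subset subsetI)

lemma design2_pair_count:
  "design2 P Bs v k lam \<Longrightarrow> x \<in> P \<Longrightarrow> y \<in> P \<Longrightarrow> x \<noteq> y \<Longrightarrow> card {B\<in>Bs. x \<in> B \<and> y \<in> B} = lam"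
  unfolding design2_def by blast

lemma design2_obtain_block:
  assumes "design2 P Bs v k lam" "x \<in> P" "y \<in> P" "x \<noteq> y"
  obtains B where "B \<in> Bs" "x \<in> B" "y \<in> B"
proof -
  have "card {B\<in>Bs. x \<in> B \<and> y \<in> B} > 0"
    using design2_pair_count[OF assms] assms(1) by (simp add: design2_def)
  then have "{B\<in>Bs. x \<in> B \<and> y \<in> B} \<noteq> {}" by (metis card.empty less_irrefl)
  with that show ?thesis by blast
qed

lemma design2_replication_subset:
  assumes D: "design2 P Bs v k lam" and "\<Delta> \<subseteq> P" "x \<in> \<Delta>"
    and meet: "\<And>B. B \<in> Bs \<Longrightarrow> x \<in> B \<Longrightarrow> card (B \<inter> \<Delta>) = c"
  shows "card {B\<in>Bs. x \<in> B} * (c - 1) = lam * (card \<Delta> - 1)"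
proof -
  define R where "R = {B\<in>Bs. x \<in> B}"
  from D have "finite \<Delta>" "finite R"
    using \<open>\<Delta> \<subseteq> P\<close> design2_finite_blocks finite_subset
    unfolding R_def design2_def by fastforce+
  have "card R * (c - 1) = (\<Sum>B\<in>R. card {y\<in>\<Delta>-{x}. y \<in> B})"
  proof -
    have "card {y\<in>\<Delta>-{x}. y \<in> B} = c - 1" if "B \<in> R" for B
    proof -
      have "{y\<in>\<Delta>-{x}. y \<in> B} = B \<inter> \<Delta> - {x}" by blast
      with that \<open>x \<in> \<Delta>\<close> \<open>finite \<Delta>\<close> meet show ?thesis by (simp add: R_def)
    qed
    then show ?thesis by simp
  qed
  also have "\<dots> = (\<Sum>y\<in>\<Delta>-{x}. card {B\<in>R. y \<in> B})"
    using \<open>finite R\<close> \<open>finite \<Delta>\<close> by (intro sum_card_incidences_swap) auto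
  also have "\<dots> = lam * (card \<Delta> - 1)"
  proof -
    have "card {B\<in>R. y \<in> B} = lam" if "y \<in> \<Delta>-{x}" for y
    proof -
      have "{B\<in>R. y \<in> B} = {B\<in>Bs. x \<in> B \<and> y \<in> B}" by (auto simp: R_def)
      with that design2_pair_count[OF D] \<open>\<Delta> \<subseteq> P\<close> \<open>x \<in> \<Delta>\<close> show ?thesis by auto
    qed
    with \<open>finite \<Delta>\<close> \<open>x \<in> \<Delta>\<close> show ?thesis by simp
  qed
  finally show ?thesis by (simp add: R_def)
qed

lemma design2_replication:
  assumes "design2 P Bs v k lam" "x \<in> P"
  shows "card {B\<in>Bs. x \<in> B} * (k - 1) = lam * (v - 1)"
  using design2_replication_subset[OF assms(1) order_refl assms(2), of k] assms
  unfolding design2_def by (auto simp: Int_absorb2)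

lemma design2_replication_ratio:
  assumes D: "design2 P Bs v k lam" and "\<Delta> \<subseteq> P" "x \<in> \<Delta>"
    and "\<And>B. B \<in> Bs \<Longrightarrow> x \<in> B \<Longrightarrow> card (B \<inter> \<Delta>) = c"
  shows "(v - 1) * (c - 1) = (card \<Delta> - 1) * (k - 1)"
proof -
  define r where "r = card {B\<in>Bs. x \<in> B}"
  have "lam * ((v - 1) * (c - 1)) = r * (k - 1) * (c - 1)"
    using design2_replication[OF D, of x] assms(2,3) by (auto simp: r_def)
  also have "\<dots> = r * (c - 1) * (k - 1)" by simp
  also have "\<dots> = lam * ((card \<Delta> - 1) * (k - 1))"
    using design2_replication_subset[OF assms] by (simp add: r_def)
  finally show ?thesis using D by (simp add: design2_def)
qed

lemma design2_two_le_block_size: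
  assumes D: "design2 P Bs v k lam" and "2 \<le> v"
  shows "2 \<le> k"
proof -
  from D \<open>2 \<le> v\<close> obtain x where "x \<in> P"
    unfolding design2_def by (metis all_not_in_conv card.empty not_numeral_le_zero)
  with D have "card {B\<in>Bs. x \<in> B} * (k - 1) = lam * (v - 1)" by (rule design2_replication)
  moreover have "lam * (v - 1) > 0" using D \<open>2 \<le> v\<close> by (simp add: design2_def)
  ultimately show ?thesis by (cases "k \<le> 1") auto
qed

lemma design2_imp_design1:
  assumes D: "design2 P Bs v k lam" and "2 \<le> v"
  shows "\<exists>r. design1 P Bs v k r"
proof -
  define r where "r = lam * (v - 1) div (k - 1)"
  have "k - 1 > 0" using design2_two_le_block_size[OF assms] by simp
  then have r: "card {B\<in>Bs. x \<in> B} = r" if "x \<in> P" for x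
    using design2_replication[OF D that] unfolding r_def by (metis div_mult_self_is_m)
  obtain x where "x \<in> P"
    using D \<open>2 \<le> v\<close> unfolding design2_def by (metis all_not_in_conv card.empty not_numeral_le_zero)
  have "r * (k - 1) = lam * (v - 1)"
    using r[OF \<open>x \<in> P\<close>] design2_replication[OF D \<open>x \<in> P\<close>] by simp
  moreover have "lam * (v - 1) > 0" using D \<open>2 \<le> v\<close> by (simp add: design2_def)
  ultimately have "r > 0" by (metis mult_is_0 neq0_conv)
  with D r show ?thesis unfolding design1_def design2_def by blast
qed

lemma two_le_card_obtain:
  assumes "2 \<le> card A"
  obtains x y where "x \<in> A" "y \<in> A" "x \<noteq> y"
  using assms that card_le_Suc0_iff_eq[of A] card.infinite by fastforce

lemma aut_group_inj_on:
  assumes "aut_group G P Bs" "g \<in> G"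
  shows "inj_on g P"
proof -
  have "g \<in> carrier (BijGroup P)"
    using assms subgroup.subset unfolding aut_group_def by blast
  then show ?thesis by (simp add: BijGroup_def Bij_def bij_betw_def)
qed

lemma flag_transitiveE:
  assumes "flag_transitive G Bs" "B \<in> Bs" "C \<in> Bs" "x \<in> B" "y \<in> C"
  obtains g where "g \<in> G" "g x = y" "g ` B = C"
  using assms unfolding flag_transitive_def by blast

lemma G_invariant_partitionD:
  assumes "G_invariant_partition G P \<Sigma> v0 v1"
  shows "\<Union>\<Sigma> = P" "\<And>\<Delta> \<Delta>'. \<Delta> \<in> \<Sigma> \<Longrightarrow> \<Delta>' \<in> \<Sigma> \<Longrightarrow> \<Delta> \<noteq> \<Delta>' \<Longrightarrow> \<Delta> \<inter> \<Delta>' = {}"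
    "\<And>\<Delta>. \<Delta> \<in> \<Sigma> \<Longrightarrow> card \<Delta> = v0" "card \<Sigma> = v1" "2 \<le> v0" "2 \<le> v1"
    "\<And>g \<Delta>. g \<in> G \<Longrightarrow> \<Delta> \<in> \<Sigma> \<Longrightarrow> g ` \<Delta> \<in> \<Sigma>"
  using assms unfolding G_invariant_partition_def by auto

lemma invariant_partition_class_subset:
  "G_invariant_partition G P \<Sigma> v0 v1 \<Longrightarrow> \<Delta> \<in> \<Sigma> \<Longrightarrow> \<Delta> \<subseteq> P"
  using G_invariant_partitionD(1) by blast

lemma invariant_partition_card:
  assumes "G_invariant_partition G P \<Sigma> v0 v1" "finite P"
  shows "card P = v0 * v1"
proof -
  note part = G_invariant_partitionD[OF assms(1)]
  have "finite \<Sigma>" using assms(2) part(1) finite_UnionD by metis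
  have "v0 * card \<Sigma> = card (\<Union>\<Sigma>)"
    by (rule card_partition[OF \<open>finite \<Sigma>\<close>]) (use assms(2) part(1-3) in auto)
  then show ?thesis using part(1,4) by (simp add: mult.commute)
qed

lemma invariant_partition_class_stable:
  assumes part: "G_invariant_partition G P \<Sigma> v0 v1" and "g \<in> G" "\<Delta> \<in> \<Sigma>" "x \<in> \<Delta>" "g x \<in> \<Delta>"
  shows "g ` \<Delta> = \<Delta>"
proof (rule ccontr)
  assume "g ` \<Delta> \<noteq> \<Delta>"
  then have "g ` \<Delta> \<inter> \<Delta> = {}"
    using G_invariant_partitionD(2,7)[OF part] \<open>g \<in> G\<close> \<open>\<Delta> \<in> \<Sigma>\<close> by blast
  with \<open>x \<in> \<Delta>\<close> \<open>g x \<in> \<Delta>\<close> show False by blast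
qed

lemma dvd_card_if_uniform_intersections:
  assumes "finite B" "finite \<Sigma>" "B \<subseteq> \<Union>\<Sigma>"
    and disj: "\<And>\<Delta> \<Delta>'. \<Delta> \<in> \<Sigma> \<Longrightarrow> \<Delta>' \<in> \<Sigma> \<Longrightarrow> \<Delta> \<noteq> \<Delta>' \<Longrightarrow> \<Delta> \<inter> \<Delta>' = {}"
    and meet: "\<And>\<Delta>. \<Delta> \<in> \<Sigma> \<Longrightarrow> B \<inter> \<Delta> \<noteq> {} \<Longrightarrow> card (B \<inter> \<Delta>) = c"
  shows "c dvd card B"
proof -
  have "B = (\<Union>\<Delta>\<in>\<Sigma>. B \<inter> \<Delta>)" using \<open>B \<subseteq> \<Union>\<Sigma>\<close> by blast
  then have "card B = (\<Sum>\<Delta>\<in>\<Sigma>. card (B \<inter> \<Delta>))"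
    using card_UN_disjoint[OF \<open>finite \<Sigma>\<close>, of "\<lambda>\<Delta>. B \<inter> \<Delta>"] \<open>finite B\<close> disj by auto
  moreover have "c dvd card (B \<inter> \<Delta>)" if "\<Delta> \<in> \<Sigma>" for \<Delta>
    using meet[OF that] by (cases "B \<inter> \<Delta> = {}") auto
  ultimately show ?thesis by (simp add: dvd_sum)
qed

section \<open>Traces of blocks on a class\<close>

definition blocks_over :: "'a set set \<Rightarrow> 'a set \<Rightarrow> 'a set \<Rightarrow> 'a set set" where
  "blocks_over Bs \<Delta> S = {B\<in>Bs. B \<inter> \<Delta> = S}"

lemma card_blocks_containing_eq_mult:
  assumes "finite Bs" "T \<noteq> {}" "T \<subseteq> \<Delta>"
    and fib: "\<And>S. S \<in> induced_blocks Bs \<Delta> \<Longrightarrow> card (blocks_over Bs \<Delta> S) = m"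
  shows "card {B\<in>Bs. T \<subseteq> B} = m * card {S\<in>induced_blocks Bs \<Delta>. T \<subseteq> S}"
proof -
  let ?IT = "{S\<in>induced_blocks Bs \<Delta>. T \<subseteq> S}"
  have "finite ?IT"
  proof -
    have "?IT \<subseteq> (\<lambda>B. B \<inter> \<Delta>) ` Bs" unfolding induced_blocks_def by blast
    then show ?thesis using \<open>finite Bs\<close> finite_surj by blast
  qed
  have "{B\<in>Bs. T \<subseteq> B} = (\<Union>S\<in>?IT. blocks_over Bs \<Delta> S)"
    using assms(2,3) unfolding blocks_over_def induced_blocks_def by blast
  then have "card {B\<in>Bs. T \<subseteq> B} = card (\<Union>S\<in>?IT. blocks_over Bs \<Delta> S)" by simp
  also have "\<dots> = (\<Sum>S\<in>?IT. card (blocks_over Bs \<Delta> S))"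
    using \<open>finite ?IT\<close> \<open>finite Bs\<close> by (intro card_UN_disjoint) (auto simp: blocks_over_def)
  also have "\<dots> = m * card ?IT" using fib by simp
  finally show ?thesis .
qed

lemma card_blocks_over_le:
  assumes "finite Bs" and blk: "\<And>B. B \<in> Bs \<Longrightarrow> B \<subseteq> P"
    and aut: "aut_group G P Bs" and ft: "flag_transitive G Bs"
    and part: "G_invariant_partition G P \<Sigma> v0 v1" and "\<Delta> \<in> \<Sigma>"
    and S: "S \<in> induced_blocks Bs \<Delta>" and S': "S' \<in> induced_blocks Bs \<Delta>"
  shows "card (blocks_over Bs \<Delta> S) \<le> card (blocks_over Bs \<Delta> S')"
proof -
  obtain B x where B: "B \<in> Bs" "S = B \<inter> \<Delta>" "x \<in> B" "x \<in> \<Delta>"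
    using S unfolding induced_blocks_def by blast
  obtain B' y where B': "B' \<in> Bs" "S' = B' \<inter> \<Delta>" "y \<in> B'" "y \<in> \<Delta>"
    using S' unfolding induced_blocks_def by blast
  obtain g where g: "g \<in> G" "g x = y" "g ` B = B'"
    using flag_transitiveE[OF ft B(1) B'(1) B(3) B'(3)] .
  have "g ` \<Delta> = \<Delta>"
    using invariant_partition_class_stable[OF part g(1) \<open>\<Delta> \<in> \<Sigma>\<close>] B(4) B'(4) g(2) by blast
  have "\<Delta> \<subseteq> P" using invariant_partition_class_subset[OF part \<open>\<Delta> \<in> \<Sigma>\<close>] .
  have inj: "inj_on g P" by (rule aut_group_inj_on[OF aut g(1)])
  have g_meet: "g ` C \<inter> \<Delta> = g ` (C \<inter> \<Delta>)" if "C \<in> Bs" for C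
    using inj_on_image_Int[OF inj blk[OF that] \<open>\<Delta> \<subseteq> P\<close>] \<open>g ` \<Delta> = \<Delta>\<close> by simp
  have "inj_on (image g) (blocks_over Bs \<Delta> S)"
    by (rule inj_on_subset[OF inj_on_image_Pow[OF inj]]) (auto simp: blocks_over_def dest: blk)
  moreover have "image g ` blocks_over Bs \<Delta> S \<subseteq> blocks_over Bs \<Delta> S'"
  proof
    fix C' assume "C' \<in> image g ` blocks_over Bs \<Delta> S"
    then obtain C where C: "C \<in> Bs" "C \<inter> \<Delta> = S" "C' = g ` C" unfolding blocks_over_def by blast
    have "g ` C \<inter> \<Delta> = S'" using g_meet[OF C(1)] g_meet[OF B(1)] C(2) B(2) B'(2) g(3) by simp
    moreover have "g ` C \<in> Bs" using aut g(1) C(1) unfolding aut_group_def by blast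
    ultimately show "C' \<in> blocks_over Bs \<Delta> S'" using C(3) unfolding blocks_over_def by blast
  qed
  ultimately show ?thesis
    using \<open>finite Bs\<close> by (intro card_inj_on_le) (auto simp: blocks_over_def)
qed

lemma flag_transitive_uniform_blocks_over:
  assumes "finite Bs" "\<And>B. B \<in> Bs \<Longrightarrow> B \<subseteq> P"
    and "aut_group G P Bs" "flag_transitive G Bs"
    and "G_invariant_partition G P \<Sigma> v0 v1" "\<Delta> \<in> \<Sigma>"
  obtains m where "\<And>S. S \<in> induced_blocks Bs \<Delta> \<Longrightarrow> card (blocks_over Bs \<Delta> S) = m"
proof (cases "induced_blocks Bs \<Delta> = {}")
  case False
  then obtain S0 where "S0 \<in> induced_blocks Bs \<Delta>" by blast
  then show ?thesis
    using that[of "card (blocks_over Bs \<Delta> S0)"] card_blocks_over_le[OF assms] by (meson antisym)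
qed (use that in blast)

lemma induced_blocks_subset_card:
  assumes "S \<in> induced_blocks Bs \<Delta>"
    and "\<And>B. B \<in> Bs \<Longrightarrow> B \<inter> \<Delta> \<noteq> {} \<Longrightarrow> card (B \<inter> \<Delta>) = k0"
  shows "S \<subseteq> \<Delta>" "card S = k0"
  using assms unfolding induced_blocks_def by auto

lemma induced_design2:
  assumes D: "design2 P Bs v k lam" and "\<Delta> \<subseteq> P" "card \<Delta> = v0" "2 \<le> v0"
    and meet: "\<And>B. B \<in> Bs \<Longrightarrow> B \<inter> \<Delta> \<noteq> {} \<Longrightarrow> card (B \<inter> \<Delta>) = k0"
    and fib: "\<And>S. S \<in> induced_blocks Bs \<Delta> \<Longrightarrow> card (blocks_over Bs \<Delta> S) = m"
  shows "\<exists>lam0. design2 \<Delta> (induced_blocks Bs \<Delta>) v0 k0 lam0"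
proof -
  have pairs: "lam = m * card {S\<in>induced_blocks Bs \<Delta>. x \<in> S \<and> y \<in> S}"
    if "x \<in> \<Delta>" "y \<in> \<Delta>" "x \<noteq> y" for x y
  proof -
    have "lam = card {B\<in>Bs. {x, y} \<subseteq> B}"
      using design2_pair_count[OF D] that \<open>\<Delta> \<subseteq> P\<close> by auto
    also have "\<dots> = m * card {S\<in>induced_blocks Bs \<Delta>. {x, y} \<subseteq> S}"
      using design2_finite_blocks[OF D] that fib by (intro card_blocks_containing_eq_mult) auto
    finally show ?thesis by simp
  qed
  obtain x0 y0 where xy0: "x0 \<in> \<Delta>" "y0 \<in> \<Delta>" "x0 \<noteq> y0"
    using two_le_card_obtain \<open>card \<Delta> = v0\<close> \<open>2 \<le> v0\<close> by metis
  have "lam > 0" using D by (simp add: design2_def)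
  with pairs[OF xy0] have "m > 0" "lam div m > 0" by auto
  then have "card {S\<in>induced_blocks Bs \<Delta>. x \<in> S \<and> y \<in> S} = lam div m"
    if "x \<in> \<Delta>" "y \<in> \<Delta>" "x \<noteq> y" for x y
    using pairs[OF that] by simp
  moreover have "finite \<Delta>" using \<open>card \<Delta> = v0\<close> \<open>2 \<le> v0\<close> card.infinite by fastforce
  ultimately show ?thesis
    using \<open>lam div m > 0\<close> \<open>card \<Delta> = v0\<close> induced_blocks_subset_card[OF _ meet]
    unfolding design2_def by blast
qed

lemma induced_design1:
  assumes D: "design1 P Bs v k r" and "\<Delta> \<subseteq> P" "card \<Delta> = v0" "1 \<le> v0"
    and meet: "\<And>B. B \<in> Bs \<Longrightarrow> B \<inter> \<Delta> \<noteq> {} \<Longrightarrow> card (B \<inter> \<Delta>) = k0"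
    and fib: "\<And>S. S \<in> induced_blocks Bs \<Delta> \<Longrightarrow> card (blocks_over Bs \<Delta> S) = m"
  shows "\<exists>r0. design1 \<Delta> (induced_blocks Bs \<Delta>) v0 k0 r0"
proof -
  have points: "r = m * card {S\<in>induced_blocks Bs \<Delta>. x \<in> S}" if "x \<in> \<Delta>" for x
  proof -
    have "r = card {B\<in>Bs. {x} \<subseteq> B}"
      using D that \<open>\<Delta> \<subseteq> P\<close> unfolding design1_def by (simp add: subset_iff)
    also have "\<dots> = m * card {S\<in>induced_blocks Bs \<Delta>. {x} \<subseteq> S}"
      using design1_finite_blocks[OF D] that fib by (intro card_blocks_containing_eq_mult) auto
    finally show ?thesis by simp
  qed
  obtain x0 where "x0 \<in> \<Delta>"
    using \<open>card \<Delta> = v0\<close> \<open>1 \<le> v0\<close> by (metis card.empty ex_in_conv not_one_le_zero)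
  have "r > 0" using D by (simp add: design1_def)
  with points[OF \<open>x0 \<in> \<Delta>\<close>] have "m > 0" "r div m > 0" by auto
  then have "card {S\<in>induced_blocks Bs \<Delta>. x \<in> S} = r div m" if "x \<in> \<Delta>" for x
    using points[OF that] by simp
  moreover have "finite \<Delta>" using \<open>card \<Delta> = v0\<close> \<open>1 \<le> v0\<close> card.infinite by fastforce
  ultimately show ?thesis
    using \<open>r div m > 0\<close> \<open>card \<Delta> = v0\<close> induced_blocks_subset_card[OF _ meet]
    unfolding design1_def by blast
qed

lemma induced_2transitive_if_pair_meets:
  assumes D: "design2 P Bs v k lam" and aut: "aut_group G P Bs" and ft: "flag_transitive G Bs"
    and part: "G_invariant_partition G P \<Sigma> v0 v1" and "\<Delta> \<in> \<Sigma>"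
    and meet: "\<And>B. B \<in> Bs \<Longrightarrow> B \<inter> \<Delta> \<noteq> {} \<Longrightarrow> card (B \<inter> \<Delta>) = 2"
  shows "induced_2transitive G \<Delta>"
  unfolding induced_2transitive_def
proof (intro ballI impI)
  have "\<Delta> \<subseteq> P" using invariant_partition_class_subset[OF part \<open>\<Delta> \<in> \<Sigma>\<close>] .
  have pair_block: "\<exists>B\<in>Bs. B \<inter> \<Delta> = {x, y}" if xy: "x \<in> \<Delta>" "y \<in> \<Delta>" "x \<noteq> y" for x y
  proof -
    obtain B where B: "B \<in> Bs" "x \<in> B" "y \<in> B"
      using design2_obtain_block[OF D, of x y] xy \<open>\<Delta> \<subseteq> P\<close> by blast
    then have "card (B \<inter> \<Delta>) = 2" using meet xy by blast
    moreover have "{x, y} \<subseteq> B \<inter> \<Delta>" using B xy by blast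
    ultimately have "{x, y} = B \<inter> \<Delta>"
      using \<open>x \<noteq> y\<close> by (intro card_subset_eq) (auto intro: card_ge_0_finite)
    with B(1) show ?thesis by blast
  qed
  fix x y x' y'
  assume "x \<in> \<Delta>" "y \<in> \<Delta>" "x' \<in> \<Delta>" "y' \<in> \<Delta>" "x \<noteq> y" "x' \<noteq> y'"
  obtain B where B: "B \<in> Bs" "B \<inter> \<Delta> = {x, y}"
    using pair_block \<open>x \<in> \<Delta>\<close> \<open>y \<in> \<Delta>\<close> \<open>x \<noteq> y\<close> by blast
  obtain C where C: "C \<in> Bs" "C \<inter> \<Delta> = {x', y'}"
    using pair_block \<open>x' \<in> \<Delta>\<close> \<open>y' \<in> \<Delta>\<close> \<open>x' \<noteq> y'\<close> by blast
  obtain g where g: "g \<in> G" "g x = x'" "g ` B = C"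
    using flag_transitiveE[OF ft B(1) C(1), of x x'] B(2) C(2) by blast
  have "g ` \<Delta> = \<Delta>"
    using invariant_partition_class_stable[OF part g(1) \<open>\<Delta> \<in> \<Sigma>\<close> \<open>x \<in> \<Delta>\<close>] g(2) \<open>x' \<in> \<Delta>\<close> by simp
  have inj: "inj_on g P" by (rule aut_group_inj_on[OF aut g(1)])
  have "B \<subseteq> P" using D B(1) unfolding design2_def by blast
  have "g ` (B \<inter> \<Delta>) = g ` B \<inter> g ` \<Delta>" by (rule inj_on_image_Int[OF inj \<open>B \<subseteq> P\<close> \<open>\<Delta> \<subseteq> P\<close>])
  then have "{g x, g y} = {x', y'}" using B(2) C(2) g(3) \<open>g ` \<Delta> = \<Delta>\<close> by simp
  moreover have "g x \<noteq> g y"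
    using inj_on_contraD[OF inj \<open>x \<noteq> y\<close>] \<open>x \<in> \<Delta>\<close> \<open>y \<in> \<Delta>\<close> \<open>\<Delta> \<subseteq> P\<close> by blast
  ultimately have "g y = y'" using g(2) by (metis doubleton_eq_iff)
  with g(1,2) \<open>g ` \<Delta> = \<Delta>\<close> show "\<exists>g\<in>G. g ` \<Delta> = \<Delta> \<and> g x = x' \<and> g y = y'" by blast
qed

section \<open>Arithmetic of the parameters\<close>

lemma camina_zieschang_bounds:
  fixes v k v0 k0 :: nat
  assumes cz: "(v - 1) * (k0 - 1) = (v0 - 1) * (k - 1)" and "2 \<le> k" "k < v" "2 \<le> v0"
  shows "2 \<le> k0" "k0 < v0"
proof -
  show "2 \<le> k0"
  proof (rule ccontr)
    assume "\<not> 2 \<le> k0"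
    then have "(v0 - 1) * (k - 1) = 0" using cz by simp
    with assms show False by simp
  qed
  show "k0 < v0"
  proof (rule ccontr)
    assume "\<not> k0 < v0"
    have "(v0 - 1) * (k - 1) < (v0 - 1) * (v - 1)" using assms by simp
    also have "\<dots> \<le> (k0 - 1) * (v - 1)" using \<open>\<not> k0 < v0\<close> by (intro mult_le_mono1) simp
    also have "\<dots> = (v0 - 1) * (k - 1)" using cz by (simp add: mult.commute)
    finally show False by simp
  qed
qed

lemma consecutive_ratio_solutions:
  fixes v k n :: nat
  assumes "(v - 1) * (n - 2) = (n - 1) * (k - 1)" "1 \<le> k" "k \<le> v" "2 \<le> n" "n < v"
  shows "\<exists>t. 2 \<le> t \<and> k = t * (n - 2) + 1 \<and> v = t * (n - 1) + 1"
proof -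
  have "(int v - 1) * (int n - 2) = (int n - 1) * (int k - 1)"
    using arg_cong[OF assms(1), of int] assms(2-4) by (simp add: of_nat_diff)
  then have "int v - 1 = (int v - int k) * (int n - 1)" "int k - 1 = (int v - int k) * (int n - 2)"
    by algebra+
  then have "int v = int ((v - k) * (n - 1) + 1)" "int k = int ((v - k) * (n - 2) + 1)"
    using assms(2-4) by (simp_all add: of_nat_diff)
  then have "v = (v - k) * (n - 1) + 1" "k = (v - k) * (n - 2) + 1"
    by (simp_all only: of_nat_eq_iff)
  moreover have "2 \<le> v - k"
    using \<open>v = (v - k) * (n - 1) + 1\<close> \<open>n < v\<close> \<open>2 \<le> n\<close> by (cases "v - k \<le> 1") (auto simp: le_Suc_eq)
  ultimately show ?thesis by blast
qed

locale imprimitive_flag_transitive_design =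
  fixes P :: "'a set" and Bs :: "'a set set" and G :: "('a \<Rightarrow> 'a) set"
    and \<Sigma> :: "'a set set" and v k lam v0 v1 k0 :: nat
  assumes design: "design2 P Bs v k lam" and block_size_less: "k < v"
    and aut: "aut_group G P Bs" and ft: "flag_transitive G Bs"
    and part: "G_invariant_partition G P \<Sigma> v0 v1"
    and meet: "\<And>B \<Delta>. B \<in> Bs \<Longrightarrow> \<Delta> \<in> \<Sigma> \<Longrightarrow> B \<inter> \<Delta> \<noteq> {} \<Longrightarrow> card (B \<inter> \<Delta>) = k0"
begin

lemma finite_points: "finite P" and card_points: "card P = v"
  and block_subset: "B \<in> Bs \<Longrightarrow> B \<subseteq> P"
  using design unfolding design2_def by auto

lemma finite_classes: "finite \<Sigma>"
  using finite_points G_invariant_partitionD(1)[OF part] finite_UnionD by metis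

lemma class_subset: "\<Delta> \<in> \<Sigma> \<Longrightarrow> \<Delta> \<subseteq> P"
  by (rule invariant_partition_class_subset[OF part])

lemma card_class: "\<Delta> \<in> \<Sigma> \<Longrightarrow> card \<Delta> = v0"
  by (rule G_invariant_partitionD(3)[OF part])

lemma two_le_v0: "2 \<le> v0"
  by (rule G_invariant_partitionD(5)[OF part])

lemma two_v0_le_v: "2 * v0 \<le> v"
  using invariant_partition_card[OF part finite_points] card_points G_invariant_partitionD(6)[OF part]
  by simp

lemma two_le_k: "2 \<le> k"
  by (rule design2_two_le_block_size[OF design]) (use two_v0_le_v two_le_v0 in simp)

lemma obtain_point_pair_in_class:
  obtains \<Delta> x y where "\<Delta> \<in> \<Sigma>" "x \<in> \<Delta>" "y \<in> \<Delta>" "x \<noteq> y"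
proof -
  obtain \<Delta> where "\<Delta> \<in> \<Sigma>"
    using two_le_card_obtain G_invariant_partitionD(4,6)[OF part] by metis
  moreover obtain x y where "x \<in> \<Delta>" "y \<in> \<Delta>" "x \<noteq> y"
    using two_le_card_obtain card_class[OF \<open>\<Delta> \<in> \<Sigma>\<close>] two_le_v0 by metis
  ultimately show ?thesis using that by blast
qed

lemma camina_zieschang: "(v - 1) * (k0 - 1) = (v0 - 1) * (k - 1)"
proof -
  obtain \<Delta> x where "\<Delta> \<in> \<Sigma>" "x \<in> \<Delta>" using obtain_point_pair_in_class by metis
  have "card (B \<inter> \<Delta>) = k0" if "B \<in> Bs" "x \<in> B" for B
    using meet[OF that(1) \<open>\<Delta> \<in> \<Sigma>\<close>] that(2) \<open>x \<in> \<Delta>\<close> by blast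
  then show ?thesis
    using design2_replication_ratio[OF design class_subset[OF \<open>\<Delta> \<in> \<Sigma>\<close>] \<open>x \<in> \<Delta>\<close>]
      card_class[OF \<open>\<Delta> \<in> \<Sigma>\<close>] by simp
qed

lemma two_le_k0: "2 \<le> k0" and k0_less_v0: "k0 < v0"
  using camina_zieschang_bounds[OF camina_zieschang two_le_k block_size_less two_le_v0] by auto

lemma k0_dvd_k: "k0 dvd k"
proof -
  obtain \<Delta> x y where "\<Delta> \<in> \<Sigma>" "x \<in> \<Delta>" "y \<in> \<Delta>" "x \<noteq> y" by (rule obtain_point_pair_in_class)
  then obtain B where "B \<in> Bs"
    using design2_obtain_block[OF design, of x y] class_subset by blast
  have "k0 dvd card B"
    by (rule dvd_card_if_uniform_intersections[where \<Sigma> = \<Sigma>])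
      (use \<open>B \<in> Bs\<close> block_subset finite_points finite_classes G_invariant_partitionD(1,2)[OF part] meet
        in \<open>auto intro: finite_subset\<close>)
  then show ?thesis using design \<open>B \<in> Bs\<close> by (simp add: design2_def)
qed

lemma uniform_blocks_over:
  assumes "\<Delta> \<in> \<Sigma>"
  obtains m where "\<And>S. S \<in> induced_blocks Bs \<Delta> \<Longrightarrow> card (blocks_over Bs \<Delta> S) = m"
  using flag_transitive_uniform_blocks_over[OF design2_finite_blocks[OF design] block_subset aut ft part
      assms] by blast

lemma induced_design2_class:
  assumes "\<Delta> \<in> \<Sigma>"
  shows "\<exists>lam0. design2 \<Delta> (induced_blocks Bs \<Delta>) v0 k0 lam0"
proof -
  obtain m where fib: "\<And>S. S \<in> induced_blocks Bs \<Delta> \<Longrightarrow> card (blocks_over Bs \<Delta> S) = m"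
    using uniform_blocks_over[OF assms] by blast
  show ?thesis
    using induced_design2[OF design class_subset[OF assms] card_class[OF assms] two_le_v0
        meet[OF _ assms] fib] .
qed

lemma induced_design1_class:
  assumes "\<Delta> \<in> \<Sigma>"
  shows "\<exists>r0. design1 \<Delta> (induced_blocks Bs \<Delta>) v0 k0 r0"
proof -
  obtain r where "design1 P Bs v k r"
    using design2_imp_design1[OF design] two_v0_le_v two_le_v0 by fastforce
  moreover obtain m where "\<And>S. S \<in> induced_blocks Bs \<Delta> \<Longrightarrow> card (blocks_over Bs \<Delta> S) = m"
    using uniform_blocks_over[OF assms] by blast
  ultimately show ?thesis
    using induced_design1[OF _ class_subset[OF assms] card_class[OF assms] _ meet[OF _ assms]] two_le_v0
    by fastforce
qed

lemma induced_2transitive_class: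
  assumes "k0 = 2" "\<Delta> \<in> \<Sigma>"
  shows "induced_2transitive G \<Delta>"
  using induced_2transitive_if_pair_meets[OF design aut ft part assms(2)] meet[OF _ assms(2)] assms(1)
  by blast

end

theorem lemma3p3:
  fixes P :: "'a set" and Bs :: "'a set set" and G :: "('a \<Rightarrow> 'a) set"
    and \<Sigma> :: "'a set set" and v k lam v0 v1 k0 :: nat
  assumes D: "design2 P Bs v k lam" and kv: "k < v"
    and aut: "aut_group G P Bs" and ft: "flag_transitive G Bs"
    and part: "G_invariant_partition G P \<Sigma> v0 v1"
    and k0: "\<forall>B\<in>Bs. \<forall>\<Delta>\<in>\<Sigma>. B \<inter> \<Delta> \<noteq> {} \<longrightarrow> card (B \<inter> \<Delta>) = k0"
  shows "v0 > k0 \<and> k0 \<ge> 2 \<and>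
    ((k0 = 2 \<and> int v = (int v0 - 1) * (2 * int (k div k0) - 1) + 1 \<and>
        (\<forall>\<Delta>\<in>\<Sigma>. induced_2transitive G \<Delta>))
     \<or> (3 \<le> k0 \<and> k0 \<le> v0 - 2 \<and>
        (\<forall>\<Delta>\<in>\<Sigma>. \<exists>lam0. design2 \<Delta> (induced_blocks Bs \<Delta>) v0 k0 lam0))
     \<or> (3 \<le> k0 \<and> k0 = v0 - 1 \<and>
        (\<forall>\<Delta>\<in>\<Sigma>. \<exists>r0. design1 \<Delta> (induced_blocks Bs \<Delta>) v0 k0 r0) \<and>
        (\<exists>t::nat. t \<ge> 2 \<and> k = t * (v0 - 2) + 1 \<and> v = t * (v0 - 1) + 1)))"
proof -
  interpret imprimitive_flag_transitive_design P Bs G \<Sigma> v k lam v0 v1 k0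
    using assms by unfold_locales blast+
  consider "k0 = 2" | "3 \<le> k0" "k0 \<le> v0 - 2" | "3 \<le> k0" "k0 = v0 - 1"
    using two_le_k0 k0_less_v0 by linarith
  then show ?thesis
  proof cases
    case 1
    then obtain q where "k = 2 * q" using k0_dvd_k by blast
    then have "int (v - 1) = int ((v0 - 1) * (2 * q - 1))" using camina_zieschang 1 by simp
    then have "int v = (int v0 - 1) * (2 * int (k div k0) - 1) + 1"
      using \<open>k = 2 * q\<close> 1 two_le_k two_le_v0 kv by (simp add: of_nat_diff)
    then show ?thesis using 1 k0_less_v0 induced_2transitive_class by blast
  next
    case 2
    then show ?thesis using induced_design2_class k0_less_v0 by simp
  next
    case 3
    then have "(v - 1) * (v0 - 2) = (v0 - 1) * (k - 1)"
      using camina_zieschang by (metis diff_diff_left one_add_one)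
    then have "\<exists>t. 2 \<le> t \<and> k = t * (v0 - 2) + 1 \<and> v = t * (v0 - 1) + 1"
      using two_le_k kv two_v0_le_v two_le_v0 by (intro consecutive_ratio_solutions) auto
    then show ?thesis using 3 induced_design1_class k0_less_v0 by auto
  qed
qed

end
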